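(* Let $P_{IV}\subset\mathbb{R}^6$ be the polytope of $\alpha=(\alpha_0,\dots,\alpha_5)$ defined by \[ \alpha_4+\alpha_5\ge1,\quad\alpha_r+\alpha_s\ge0\ (1\le r<s\le3),\quad\alpha_0+\alpha_r\ge0\ (r=4,5),\quad\sum_{r=0}^5\alpha_r=1. \] Then the vertices of $P_{IV}$ are the orbits under $S_1\times S_3\times S_2$ (with $S_3$ permuting $(\alpha_1,\alpha_2,\alpha_3)$ and $S_2$ permuting $(\alpha_4,\alpha_5)$) of the points $(0,0,0,0,0,1)$, $(-\frac12,-\frac12,\frac12,\frac12,\frac12,\frac12)$ and $(-1,0,0,0,1,1)$. *)

theory Defs
  imports "HOL-Analysis.Analysis"
begin

definition mk6 :: "real \<Rightarrow> real \<Rightarrow> real \<Rightarrow> real \<Rightarrow> real \<Rightarrow> real \<Rightarrow> real ^ 6" where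
  "mk6 a0 a1 a2 a3 a4 a5 = (\<chi> i. if i = 0 then a0 else if i = 1 then a1 else if i = 2 then a2
      else if i = 3 then a3 else if i = 4 then a4 else a5)"

definition P_IV :: "(real ^ 6) set" where
  "P_IV = {x. x $ 4 + x $ 5 \<ge> 1
      \<and> (\<forall>r s::6. r \<in> {1,2,3} \<and> s \<in> {1,2,3} \<and> r \<noteq> s \<longrightarrow> x $ r + x $ s \<ge> 0)
      \<and> (\<forall>r::6. r \<in> {4,5} \<longrightarrow> x $ 0 + x $ r \<ge> 0)
      \<and> (\<Sum>i\<in>UNIV. x $ i) = 1}"

definition G_IV :: "(6 \<Rightarrow> 6) set" where
  "G_IV = {p. bij p \<and> p 0 = 0 \<and> p ` {1,2,3} = {1,2,3} \<and> p ` {4,5} = {4,5}}"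

definition perm_coords :: "(6 \<Rightarrow> 6) \<Rightarrow> real ^ 6 \<Rightarrow> real ^ 6" where
  "perm_coords p x = (\<chi> i. x $ p i)"

definition orbit_IV :: "real ^ 6 \<Rightarrow> (real ^ 6) set" where
  "orbit_IV v = (\<lambda>p. perm_coords p v) ` G_IV"

end

theory Submission
  imports Defs
begin

text \<open>Each of the six inequalities defining \<open>P_IV\<close> is tight at all but one of the six
  points in the three orbits, and on the hyperplane \<open>\<Sum>\<alpha>\<^sub>r = 1\<close> the six slacks sum to 1.
  So the slacks are barycentric coordinates: \<open>P_IV\<close> is the simplex spanned by these six
  affinely independent points, which are therefore exactly its vertices. The group
  \<open>S\<^sub>1 \<times> S\<^sub>3 \<times> S\<^sub>2\<close> permutes the inequalities, hence acts on \<open>P_IV\<close> by linear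
  bijections and preserves its vertex set, and transpositions carry the three orbit
  representatives to all six vertices.\<close>

lemma exhaust_6: "(i::6) = 0 \<or> i = 1 \<or> i = 2 \<or> i = 3 \<or> i = 4 \<or> i = 5"
proof (induct i)
  case (of_int z)
  then have "z = 0 \<or> z = 1 \<or> z = 2 \<or> z = 3 \<or> z = 4 \<or> z = 5" by auto
  then show ?case by auto
qed

lemma forall_6: "(\<forall>i::6. P i) \<longleftrightarrow> P 0 \<and> P 1 \<and> P 2 \<and> P 3 \<and> P 4 \<and> P 5"
  by (metis exhaust_6)

lemma UNIV_6: "UNIV = {0, 1, 2, 3, 4, 5::6}"
  using exhaust_6 by auto

lemma sum_6: "sum f (UNIV::6 set) = f 0 + f 1 + f 2 + f 3 + f 4 + f 5"
  unfolding UNIV_6 by (simp add: ac_simps)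

lemma mk6_nth [simp]:
  "mk6 a0 a1 a2 a3 a4 a5 $ 0 = a0" "mk6 a0 a1 a2 a3 a4 a5 $ 1 = a1"
  "mk6 a0 a1 a2 a3 a4 a5 $ 2 = a2" "mk6 a0 a1 a2 a3 a4 a5 $ 3 = a3"
  "mk6 a0 a1 a2 a3 a4 a5 $ 4 = a4" "mk6 a0 a1 a2 a3 a4 a5 $ 5 = a5"
  by (simp_all add: mk6_def)

lemma inner_mk6: "mk6 a0 a1 a2 a3 a4 a5 \<bullet> x =
    a0 * x $ 0 + a1 * x $ 1 + a2 * x $ 2 + a3 * x $ 3 + a4 * x $ 4 + a5 * x $ 5"
  by (simp add: inner_vec_def sum_6)

lemma affine_independent_if_biorthogonal:
  fixes v :: "'i \<Rightarrow> 'a::real_vector" and h :: "'i \<Rightarrow> 'a \<Rightarrow> real"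
  assumes "finite I"
    and h: "\<And>i. i \<in> I \<Longrightarrow> linear (h i)"
    and dual: "\<And>i j. i \<in> I \<Longrightarrow> j \<in> I \<Longrightarrow> h i (v j) - c i = (if i = j then 1 else 0)"
  shows "\<not> affine_dependent (v ` I)"
proof
  have inj: "inj_on v I"
  proof (rule inj_onI)
    fix i j assume "i \<in> I" "j \<in> I" "v i = v j"
    then have "h i (v j) - c i = 1" using dual[of i i] by simp
    then show "i = j" using dual[of i j] \<open>i \<in> I\<close> \<open>j \<in> I\<close> by (simp split: if_splits)
  qed
  assume "affine_dependent (v ` I)"
  then obtain U k where U: "sum U (v ` I) = 0" "(\<Sum>w\<in>v ` I. U w *\<^sub>R w) = 0"
      and k: "k \<in> I" "U (v k) \<noteq> 0"
    using affine_dependent_explicit_finite[of "v ` I"] \<open>finite I\<close> by auto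
  have sums: "(\<Sum>j\<in>I. U (v j)) = 0" "(\<Sum>j\<in>I. U (v j) *\<^sub>R v j) = 0"
    using U by (simp_all add: sum.reindex[OF inj])
  have "(\<Sum>j\<in>I. U (v j) * h k (v j)) = h k (\<Sum>j\<in>I. U (v j) *\<^sub>R v j)"
    using h[OF k(1)] by (simp add: linear_sum linear_scale)
  then have "(\<Sum>j\<in>I. U (v j) * (h k (v j) - c k)) = 0"
    using sums linear_0[OF h[OF k(1)]]
    by (simp add: right_diff_distrib sum_subtractf flip: sum_distrib_right)
  moreover have "(\<Sum>j\<in>I. U (v j) * (h k (v j) - c k)) = U (v k)"
  proof -
    have "(\<Sum>j\<in>I. U (v j) * (h k (v j) - c k)) = (\<Sum>j\<in>I. if k = j then U (v j) else 0)"
      using k(1) by (intro sum.cong) (simp_all add: dual)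
    then show ?thesis
      using k(1) \<open>finite I\<close> by simp
  qed
  ultimately show False
    using k by simp
qed

lemma extreme_point_of_linear_image:
  assumes "linear f" "inj f"
  shows "f x extreme_point_of f ` S \<longleftrightarrow> x extreme_point_of S"
  using assms by (auto simp: extreme_point_of_def open_segment_linear_image inj_image_mem_iff)

definition facet_normal_IV :: "nat \<Rightarrow> real ^ 6" where
  "facet_normal_IV k = [mk6 1 0 0 0 0 1, mk6 1 0 0 0 1 0, mk6 0 0 1 1 0 0,
     mk6 0 1 0 1 0 0, mk6 0 1 1 0 0 0, mk6 0 0 0 0 1 1] ! k"

definition slack_IV :: "nat \<Rightarrow> real ^ 6 \<Rightarrow> real" where
  "slack_IV k x = facet_normal_IV k \<bullet> x - (if k = 5 then 1 else 0)"

definition vertex_IV :: "nat \<Rightarrow> real ^ 6" where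
  "vertex_IV k = [mk6 0 0 0 0 0 1, mk6 0 0 0 0 1 0,
     mk6 (-1/2) (-1/2) (1/2) (1/2) (1/2) (1/2), mk6 (-1/2) (1/2) (-1/2) (1/2) (1/2) (1/2),
     mk6 (-1/2) (1/2) (1/2) (-1/2) (1/2) (1/2), mk6 (-1) 0 0 0 1 1] ! k"

lemma lessThan_6: "{..<6::nat} = {0, 1, 2, 3, 4, 5}"
  by (auto simp: numeral_eq_Suc)

lemma slack_IV_vertex_IV:
  assumes "i < 6" "j < 6"
  shows "slack_IV i (vertex_IV j) = (if i = j then 1 else 0)"
proof -
  have "\<forall>i\<in>{..<6}. \<forall>j\<in>{..<6}. slack_IV i (vertex_IV j) = (if i = j then 1 else 0)"
    by (simp add: lessThan_6 slack_IV_def facet_normal_IV_def vertex_IV_def inner_mk6)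
  then show ?thesis
    using assms by simp
qed

lemma sum_slack_IV: "(\<Sum>k<6. slack_IV k x) = 2 * (\<Sum>i\<in>UNIV. x $ i) - 1"
  by (simp add: lessThan_6 sum_6 slack_IV_def facet_normal_IV_def inner_mk6)

lemma all_nat_less_6: "(\<forall>k<6::nat. P k) \<longleftrightarrow> P 0 \<and> P 1 \<and> P 2 \<and> P 3 \<and> P 4 \<and> P 5"
  using lessThan_6 unfolding set_eq_iff lessThan_iff by (metis insertCI insertE empty_iff)

lemma P_IV_eq: "P_IV = {x. (\<forall>k<6. 0 \<le> slack_IV k x) \<and> (\<Sum>i\<in>UNIV. x $ i) = 1}"
proof (intro set_eqI)
  fix x :: "real ^ 6"
  have "(\<forall>r s::6. r \<in> {1,2,3} \<and> s \<in> {1,2,3} \<and> r \<noteq> s \<longrightarrow> 0 \<le> x $ r + x $ s)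
      \<longleftrightarrow> 0 \<le> x $ 1 + x $ 2 \<and> 0 \<le> x $ 1 + x $ 3 \<and> 0 \<le> x $ 2 + x $ 3"
  proof
    assume "\<forall>r s::6. r \<in> {1,2,3} \<and> s \<in> {1,2,3} \<and> r \<noteq> s \<longrightarrow> 0 \<le> x $ r + x $ s"
    from this[rule_format, of 1 2] this[rule_format, of 1 3] this[rule_format, of 2 3]
    show "0 \<le> x $ 1 + x $ 2 \<and> 0 \<le> x $ 1 + x $ 3 \<and> 0 \<le> x $ 2 + x $ 3" by simp
  qed (auto simp: add.commute)
  then show "x \<in> P_IV \<longleftrightarrow> x \<in> {x. (\<forall>k<6. 0 \<le> slack_IV k x) \<and> (\<Sum>i\<in>UNIV. x $ i) = 1}"
    unfolding P_IV_def all_nat_less_6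
    by (simp add: slack_IV_def facet_normal_IV_def inner_mk6 all_conj_distrib) blast
qed

lemma sum_slack_scaleR_vertex_IV:
  assumes "(\<Sum>i\<in>UNIV. x $ i) = 1"
  shows "(\<Sum>k<6. slack_IV k x *\<^sub>R vertex_IV k) = x"
  using assms
  by (simp add: lessThan_6 sum_6 slack_IV_def facet_normal_IV_def vertex_IV_def inner_mk6
      vec_eq_iff forall_6 field_simps)

lemma vertex_IV_in_P_IV:
  assumes "k < 6"
  shows "vertex_IV k \<in> P_IV"
proof -
  have "(\<Sum>j<6. slack_IV j (vertex_IV k)) = (\<Sum>j<6. if k = j then 1 else 0)"
    using assms by (intro sum.cong) (simp_all add: slack_IV_vertex_IV)
  then show ?thesis
    using assms sum_slack_IV[of "vertex_IV k"] by (simp add: P_IV_eq slack_IV_vertex_IV)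
qed

lemma convex_P_IV: "convex P_IV"
proof -
  have "P_IV = (\<Inter>k<6. {x. 0 \<le> slack_IV k x}) \<inter> {x. (\<chi> i. 1) \<bullet> x = 1}"
    by (auto simp: P_IV_eq inner_vec_def)
  moreover have "convex {x. 0 \<le> slack_IV k x}" for k
    using convex_halfspace_ge[of "if k = 5 then 1 else 0" "facet_normal_IV k"]
    by (simp add: slack_IV_def)
  ultimately show ?thesis
    by (metis convex_INT convex_Int convex_hyperplane)
qed

lemma P_IV_eq_convex_hull: "P_IV = convex hull (vertex_IV ` {..<6})"
proof
  show "convex hull (vertex_IV ` {..<6}) \<subseteq> P_IV"
    by (rule hull_minimal) (auto simp: vertex_IV_in_P_IV convex_P_IV)
  show "P_IV \<subseteq> convex hull (vertex_IV ` {..<6})"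
  proof
    fix x assume x: "x \<in> P_IV"
    then have "(\<Sum>k<6. slack_IV k x *\<^sub>R vertex_IV k) \<in> convex hull (vertex_IV ` {..<6})"
      by (intro convex_sum) (auto simp: P_IV_eq sum_slack_IV intro: hull_inc)
    then show "x \<in> convex hull (vertex_IV ` {..<6})"
      using x by (simp add: P_IV_eq sum_slack_scaleR_vertex_IV)
  qed
qed

lemma affine_independent_vertex_IV: "\<not> affine_dependent (vertex_IV ` {..<6})"
proof (rule affine_independent_if_biorthogonal)
  show "linear (\<lambda>x. facet_normal_IV k \<bullet> x)" for k
    by (simp add: bounded_linear.linear bounded_linear_inner_right)
  show "facet_normal_IV i \<bullet> vertex_IV j - (if i = 5 then 1 else 0) = (if i = j then 1 else 0)"
    if "i \<in> {..<6}" "j \<in> {..<6}" for i j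
    using slack_IV_vertex_IV[of i j] that by (simp add: slack_IV_def)
qed simp

lemma extreme_points_P_IV: "{v. v extreme_point_of P_IV} = vertex_IV ` {..<6}"
  unfolding P_IV_eq_convex_hull
  by (simp add: extreme_point_of_convex_hull_affine_independent[OF affine_independent_vertex_IV])

lemma perm_coords_comp: "perm_coords p (perm_coords q x) = perm_coords (q \<circ> p) x"
  by (simp add: perm_coords_def)

lemma perm_coords_id: "perm_coords id x = x"
  by (simp add: perm_coords_def)

lemma linear_perm_coords: "linear (perm_coords p)"
  by (rule linearI) (simp_all add: perm_coords_def vec_eq_iff)

lemma inj_perm_coords:
  assumes "surj p"
  shows "inj (perm_coords p)"
proof (rule inj_on_inverseI)
  show "perm_coords (inv p) (perm_coords p x) = x" for x
    using assms by (simp add: perm_coords_comp surj_iff perm_coords_id)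
qed

lemma G_IV_inv:
  assumes "p \<in> G_IV"
  shows "inv p \<in> G_IV"
proof -
  have p: "bij p" "p 0 = 0" "p ` {1,2,3} = {1,2,3}" "p ` {4,5} = {4,5}"
    using assms by (simp_all add: G_IV_def)
  have inj: "inj p"
    using p(1) by (rule bij_is_inj)
  have "inv p ` {1,2,3} = {1,2,3}" "inv p ` {4,5} = {4,5}"
    using image_inv_f_f[OF inj, of "{1,2,3}"] image_inv_f_f[OF inj, of "{4,5}"]
    unfolding p(3,4) .
  then show ?thesis
    using p by (simp add: G_IV_def bij_imp_bij_inv inv_f_eq[OF inj])
qed

lemma perm_coords_mem_P_IV:
  assumes p: "p \<in> G_IV" and x: "x \<in> P_IV"
  shows "perm_coords p x \<in> P_IV"
proof -
  have "bij p" "p 0 = 0" and img: "p ` {1,2,3} = {1,2,3}" "p ` {4,5} = {4,5}"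
    using p by (simp_all add: G_IV_def)
  have "{p 4, p 5} = {4, 5}"
    using img(2) by simp
  moreover have "p r \<in> {1,2,3}" if "r \<in> {1,2,3}" for r
    using img(1) that by blast
  moreover have "p r \<in> {4,5}" if "r \<in> {4,5}" for r
    using img(2) that by blast
  moreover have "(\<Sum>i\<in>UNIV. x $ p i) = (\<Sum>i\<in>UNIV. x $ i)"
    using \<open>bij p\<close> by (rule sum.reindex_bij_betw)
  ultimately show ?thesis
    using x \<open>p 0 = 0\<close> bij_is_inj[OF \<open>bij p\<close>]
    by (auto simp: P_IV_def perm_coords_def inj_eq doubleton_eq_iff)
qed

lemma perm_coords_image_P_IV:
  assumes "p \<in> G_IV"
  shows "perm_coords p ` P_IV = P_IV"
proof
  show "perm_coords p ` P_IV \<subseteq> P_IV"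
    using assms perm_coords_mem_P_IV by blast
  show "P_IV \<subseteq> perm_coords p ` P_IV"
  proof
    fix x assume "x \<in> P_IV"
    moreover have "x = perm_coords p (perm_coords (inv p) x)"
      using assms by (simp add: G_IV_def perm_coords_comp bij_is_inj perm_coords_id)
    ultimately show "x \<in> perm_coords p ` P_IV"
      using assms G_IV_inv perm_coords_mem_P_IV by blast
  qed
qed

lemma orbit_IV_subset_extreme_points:
  assumes "v extreme_point_of P_IV"
  shows "orbit_IV v \<subseteq> {w. w extreme_point_of P_IV}"
proof
  fix w assume "w \<in> orbit_IV v"
  then obtain p where p: "p \<in> G_IV" and w: "w = perm_coords p v"
    by (auto simp: orbit_IV_def)
  have "inj (perm_coords p)"
    using p by (simp add: G_IV_def bij_is_surj inj_perm_coords)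
  then show "w \<in> {w. w extreme_point_of P_IV}"
    using extreme_point_of_linear_image[OF linear_perm_coords, of p v P_IV] assms
    by (simp add: w perm_coords_image_P_IV[OF p])
qed

lemma transpose_mem_G_IV:
  assumes "{a, b} \<subseteq> {1,2,3} \<or> {a, b} \<subseteq> {4,5}"
  shows "Transposition.transpose a b \<in> G_IV"
  using assms by (auto simp: G_IV_def transpose_apply_other)

lemma orbit_IV_refl: "v \<in> orbit_IV v"
proof -
  have "id \<in> G_IV"
    by (simp add: G_IV_def)
  then show ?thesis
    unfolding orbit_IV_def using perm_coords_id by (metis image_eqI)
qed

lemma vertex_IV_subset_orbits:
  "vertex_IV ` {..<6} \<subseteq> orbit_IV (vertex_IV 0) \<union> orbit_IV (vertex_IV 2) \<union> orbit_IV (vertex_IV 5)"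
proof -
  have swap: "perm_coords (Transposition.transpose a b) v \<in> orbit_IV v"
    if "{a, b} \<subseteq> {1,2,3} \<or> {a, b} \<subseteq> {4,5}" for a b v
    using transpose_mem_G_IV[OF that] by (simp add: orbit_IV_def)
  have "vertex_IV 1 = perm_coords (Transposition.transpose 4 5) (vertex_IV 0)"
    "vertex_IV 3 = perm_coords (Transposition.transpose 1 2) (vertex_IV 2)"
    "vertex_IV 4 = perm_coords (Transposition.transpose 1 3) (vertex_IV 2)"
    by (simp_all add: vertex_IV_def vec_eq_iff forall_6 perm_coords_def transpose_def)
  then show ?thesis
    using orbit_IV_refl swap[of 4 5] swap[of 1 2] swap[of 1 3] by (auto simp: lessThan_6)
qed

theorem lemmaA7:
  shows "{v. v extreme_point_of P_IV} =
     orbit_IV (mk6 0 0 0 0 0 1)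
     \<union> orbit_IV (mk6 (-1/2) (-1/2) (1/2) (1/2) (1/2) (1/2))
     \<union> orbit_IV (mk6 (-1) 0 0 0 1 1)"
proof -
  have reps: "mk6 0 0 0 0 0 1 = vertex_IV 0" "mk6 (-1/2) (-1/2) (1/2) (1/2) (1/2) (1/2) = vertex_IV 2"
      "mk6 (-1) 0 0 0 1 1 = vertex_IV 5"
    by (simp_all add: vertex_IV_def)
  have "vertex_IV k extreme_point_of P_IV" if "k < 6" for k
    using that extreme_points_P_IV by blast
  then have "orbit_IV (vertex_IV 0) \<union> orbit_IV (vertex_IV 2) \<union> orbit_IV (vertex_IV 5)
      \<subseteq> {v. v extreme_point_of P_IV}"
    by (simp add: orbit_IV_subset_extreme_points)
  then show ?thesis
    unfolding reps using vertex_IV_subset_orbits extreme_points_P_IV by blast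
qed

end
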